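(* Let $(\mathcal E,B,\mathcal L_{\mathcal P})$ be an epistemic space with $|\mathcal P|\ge2$. Any ES basic fusion operator that satisfies (ESF-SD), (ESF-U) and (ESF-I) also satisfies (ESF-D).
   Context: $[\![\phi]\!]$ denotes models; $\varphi_M$ a formula with models exactly $M$. Epistemic space: $\mathcal E$ nonempty, $B:\mathcal E\to\mathcal L_{\mathcal P}$ (propositional formulas over finite $\mathcal P$) with image modulo equivalence exactly the consistent formulas. Agents: well-ordered set $\mathcal S$; society: nonempty finite $N\subseteq\mathcal S$; $N$-profile $\Phi:N\to\mathcal E$, $E_i=\Phi(i)$, identified with $E_i$ if $N=\{i\}$; profiles on $\{i_1<\dots<i_n\}$, $\{j_1<\dots<j_m\}$ equivalent if $n=m$ and entries coincide position-wise. ES basic fusion operator: a map $\nabla(\Phi,E)\in\mathcal E$ with (ESF1) $B(\nabla(\Phi,E))\vdash B(E)$; (ESF2) equivalent profiles and $B(E)\equiv B(E')$ give equivalent $B(\nabla)$; (ESF3) if $B(E)\equiv B(E')\wedge B(E'')$ then $B(\nabla(\Phi,E'))\wedge B(E'')\vdash B(\nabla(\Phi,E))$; (ESF4) if moreover $B(\nabla(\Phi,E'))\wedge B(E'')\nvdash\bot$ then $B(\nabla(\Phi,E))\vdash B(\nabla(\Phi,E'))\wedge B(E'')$. (ESF-SD): for every agent $i$, interpretations $w,w',w''$ and $E_{w,w'},E_{w',w''}$ with $[\![B(E_{w,w'})]\!]=\{w,w'\}$, $[\![B(E_{w',w''})]\!]=\{w',w''\}$, there exist $i$-profiles realising each of: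 (i) $B(\nabla(E_i,E_{w,w'}))\equiv\varphi_{w,w'}$ and $B(\nabla(E_i,E_{w',w''}))\equiv\varphi_{w',w''}$; (ii) $\equiv\varphi_{w,w'}$ and $\equiv\varphi_{w'}$; (iii) $\equiv\varphi_w$ and $\equiv\varphi_{w',w''}$; (iv) $\equiv\varphi_w$ and $\equiv\varphi_{w'}$. (ESF-U): for every $N$, $N$-profile $\Phi$, $E$: if $E_i=E_j$ for all $i,j\in N$ then $B(\nabla(\Phi,E))\equiv B(\nabla(E_i,E))$ for all $i\in N$. (ESF-I): for every $N$, $N$-profiles $\Phi,\Phi'$, $E$: if for every $E'$ with $B(E')\vdash B(E)$, $B(\nabla(E_j,E'))\equiv B(\nabla(E'_j,E'))$ for all $j\in N$, then $B(\nabla(\Phi,E))\equiv B(\nabla(\Phi',E))$. (ESF-D): for every society $N$ there exists $d_N\in N$ such that for every $N$-profile $\Phi$ and every $E$, $B(\nabla(\Phi,E))\vdash B(\nabla(E_{d_N},E))$. *)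

theory Defs
  imports Main
begin

datatype 'p form = Atom 'p | FBot | FNeg "'p form" | FAnd "'p form" "'p form"
  | FOr "'p form" "'p form" | FImp "'p form" "'p form"

fun sat :: "'p set \<Rightarrow> 'p form \<Rightarrow> bool" where
  "sat w (Atom p) = (p \<in> w)"
| "sat w FBot = False"
| "sat w (FNeg f) = (\<not> sat w f)"
| "sat w (FAnd f g) = (sat w f \<and> sat w g)"
| "sat w (FOr f g) = (sat w f \<or> sat w g)"
| "sat w (FImp f g) = (sat w f \<longrightarrow> sat w g)"

definition models :: "'p form \<Rightarrow> 'p set set" where
  "models f = {w. sat w f}"

definition entails :: "'p form \<Rightarrow> 'p form \<Rightarrow> bool" (infix "\<turnstile>" 55) where
  "f \<turnstile> g \<longleftrightarrow> models f \<subseteq> models g"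

definition equiv_form :: "'p form \<Rightarrow> 'p form \<Rightarrow> bool" (infix "\<equiv>\<^sub>F" 55) where
  "f \<equiv>\<^sub>F g \<longleftrightarrow> models f = models g"

definition consistent :: "'p form \<Rightarrow> bool" where
  "consistent f \<longleftrightarrow> \<not> (f \<turnstile> FBot)"

text \<open>The set of epistemic states is the (nonempty) type 'e.  B maps every state to a
  formula; its image modulo equivalence is exactly the set of consistent formulas.\<close>
definition epistemic_space :: "('e \<Rightarrow> 'p form) \<Rightarrow> bool" where
  "epistemic_space B \<longleftrightarrow>
     (\<forall>e. consistent (B e)) \<and> (\<forall>f. consistent f \<longrightarrow> (\<exists>e. B e \<equiv>\<^sub>F f))"

definition society :: "'a set \<Rightarrow> bool" where
  "society N \<longleftrightarrow> N \<noteq> {} \<and> finite N"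

definition profile :: "('a \<rightharpoonup> 'e) \<Rightarrow> bool" where
  "profile \<Phi> \<longleftrightarrow> society (dom \<Phi>)"

definition equiv_profile :: "('a::linorder \<rightharpoonup> 'e) \<Rightarrow> ('a \<rightharpoonup> 'e) \<Rightarrow> bool" where
  "equiv_profile \<Phi> \<Psi> \<longleftrightarrow>
     map (\<lambda>i. the (\<Phi> i)) (sorted_list_of_set (dom \<Phi>))
       = map (\<lambda>i. the (\<Psi> i)) (sorted_list_of_set (dom \<Psi>))"

text \<open>A single state E_i is identified with the {i}-profile [i \<mapsto> E_i].\<close>

definition ES_basic_fusion ::
  "('e \<Rightarrow> 'p form) \<Rightarrow> (('a::linorder \<rightharpoonup> 'e) \<Rightarrow> 'e \<Rightarrow> 'e) \<Rightarrow> bool" where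
  "ES_basic_fusion B nab \<longleftrightarrow>
     (\<forall>\<Phi> E. profile \<Phi> \<longrightarrow> B (nab \<Phi> E) \<turnstile> B E) \<and>
     (\<forall>\<Phi> \<Phi>' E E'. profile \<Phi> \<longrightarrow> profile \<Phi>' \<longrightarrow> equiv_profile \<Phi> \<Phi>' \<longrightarrow> B E \<equiv>\<^sub>F B E'
        \<longrightarrow> B (nab \<Phi> E) \<equiv>\<^sub>F B (nab \<Phi>' E')) \<and>
     (\<forall>\<Phi> E E' E''. profile \<Phi> \<longrightarrow> B E \<equiv>\<^sub>F FAnd (B E') (B E'')
        \<longrightarrow> FAnd (B (nab \<Phi> E')) (B E'') \<turnstile> B (nab \<Phi> E)) \<and>
     (\<forall>\<Phi> E E' E''. profile \<Phi> \<longrightarrow> B E \<equiv>\<^sub>F FAnd (B E') (B E'')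
        \<longrightarrow> consistent (FAnd (B (nab \<Phi> E')) (B E''))
        \<longrightarrow> B (nab \<Phi> E) \<turnstile> FAnd (B (nab \<Phi> E')) (B E''))"

text \<open>(ESF-SD).  "B(X) \<equiv> \<phi>_M" is written as "models (B X) = M".  The three
  interpretations are taken pairwise distinct.\<close>
definition ESF_SD ::
  "('e \<Rightarrow> 'p form) \<Rightarrow> (('a \<rightharpoonup> 'e) \<Rightarrow> 'e \<Rightarrow> 'e) \<Rightarrow> bool" where
  "ESF_SD B nab \<longleftrightarrow>
     (\<forall>(i::'a) (w::'p set) w' w'' E1 E2.
        w \<noteq> w' \<longrightarrow> w' \<noteq> w'' \<longrightarrow> w \<noteq> w'' \<longrightarrow>
        models (B E1) = {w, w'} \<longrightarrow> models (B E2) = {w', w''} \<longrightarrow>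
        (\<exists>Ei. models (B (nab [i \<mapsto> Ei] E1)) = {w, w'} \<and> models (B (nab [i \<mapsto> Ei] E2)) = {w', w''}) \<and>
        (\<exists>Ei. models (B (nab [i \<mapsto> Ei] E1)) = {w, w'} \<and> models (B (nab [i \<mapsto> Ei] E2)) = {w'}) \<and>
        (\<exists>Ei. models (B (nab [i \<mapsto> Ei] E1)) = {w} \<and> models (B (nab [i \<mapsto> Ei] E2)) = {w', w''}) \<and>
        (\<exists>Ei. models (B (nab [i \<mapsto> Ei] E1)) = {w} \<and> models (B (nab [i \<mapsto> Ei] E2)) = {w'}))"

definition ESF_U ::
  "('e \<Rightarrow> 'p form) \<Rightarrow> (('a \<rightharpoonup> 'e) \<Rightarrow> 'e \<Rightarrow> 'e) \<Rightarrow> bool" where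
  "ESF_U B nab \<longleftrightarrow>
     (\<forall>\<Phi> E. profile \<Phi> \<longrightarrow> (\<forall>i\<in>dom \<Phi>. \<forall>j\<in>dom \<Phi>. \<Phi> i = \<Phi> j) \<longrightarrow>
        (\<forall>i\<in>dom \<Phi>. B (nab \<Phi> E) \<equiv>\<^sub>F B (nab [i \<mapsto> the (\<Phi> i)] E)))"

definition ESF_I ::
  "('e \<Rightarrow> 'p form) \<Rightarrow> (('a \<rightharpoonup> 'e) \<Rightarrow> 'e \<Rightarrow> 'e) \<Rightarrow> bool" where
  "ESF_I B nab \<longleftrightarrow>
     (\<forall>\<Phi> \<Phi>' E. profile \<Phi> \<longrightarrow> dom \<Phi>' = dom \<Phi> \<longrightarrow>
        (\<forall>E'. B E' \<turnstile> B E \<longrightarrow>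
           (\<forall>j\<in>dom \<Phi>. B (nab [j \<mapsto> the (\<Phi> j)] E') \<equiv>\<^sub>F B (nab [j \<mapsto> the (\<Phi>' j)] E'))) \<longrightarrow>
        B (nab \<Phi> E) \<equiv>\<^sub>F B (nab \<Phi>' E))"

definition ESF_D ::
  "('e \<Rightarrow> 'p form) \<Rightarrow> (('a \<rightharpoonup> 'e) \<Rightarrow> 'e \<Rightarrow> 'e) \<Rightarrow> bool" where
  "ESF_D B nab \<longleftrightarrow>
     (\<forall>N. society N \<longrightarrow> (\<exists>d\<in>N. \<forall>\<Phi> E. dom \<Phi> = N \<longrightarrow>
        B (nab \<Phi> E) \<turnstile> B (nab [d \<mapsto> the (\<Phi> d)] E)))"

end

theory Submission
  imports Defs
begin

text \<open>By (ESF3) and (ESF4), the interpretations that a profile \<Phi> selects from a set S obey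
  Arrow's choice axiom, so they are the maximal elements of S for the weak order "x is selected
  from {x, y}".  The operator thus becomes a social welfare function on weak orders of
  interpretations: (ESF-I) is independence of irrelevant alternatives, (ESF-U) together with
  (ESF-I) gives weak Pareto, and (ESF-SD) supplies the individual orders on triples that Arrow's
  proof needs, while |P| \<ge> 2 gives at least three interpretations.  Arrow's theorem, proved
  with decisive coalitions, yields a dictator in every society; since selections are sets of
  maximal elements, the social selection lies inside the dictator's, which is (ESF-D).\<close>

section \<open>Definability of sets of interpretations\<close>

lemma models_FAnd: "models (FAnd f g) = models f \<inter> models g"
  unfolding models_def by auto

lemma consistent_iff_models: "consistent f \<longleftrightarrow> models f \<noteq> {}"
  unfolding consistent_def entails_def models_def by auto

lemma sat_conj_list:
  "sat v (foldr (\<lambda>p f. FAnd (g p) f) qs (FNeg FBot)) \<longleftrightarrow> (\<forall>p\<in>set qs. sat v (g p))"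
  by (induction qs) auto

lemma sat_disj_list: "sat v (foldr (\<lambda>p f. FOr (g p) f) qs FBot) \<longleftrightarrow> (\<exists>p\<in>set qs. sat v (g p))"
  by (induction qs) auto

lemma definable: "\<exists>f. models f = (S :: 'p::finite set set)"
proof -
  obtain ps :: "'p list" where ps: "set ps = UNIV"
    using finite_list[OF finite_UNIV] by blast
  define lit where "lit w p = (if p \<in> w then Atom p else FNeg (Atom p))" for w :: "'p set" and p
  define char where "char w = foldr (\<lambda>p f. FAnd (lit w p) f) ps (FNeg FBot)" for w
  have sat_char: "sat v (char w) \<longleftrightarrow> v = w" for v w
    unfolding char_def sat_conj_list ps lit_def by auto
  obtain ws where ws: "set ws = S"
    using finite_list[OF finite_subset[OF subset_UNIV finite_UNIV]] by blast
  have "models (foldr (\<lambda>w f. FOr (char w) f) ws FBot) = S"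
    unfolding models_def sat_disj_list sat_char ws by simp
  then show ?thesis by blast
qed

lemma three_interpretations:
  assumes "card (UNIV :: 'p set) \<ge> 2"
  shows "\<exists>x y z :: 'p set. x \<noteq> y \<and> y \<noteq> z \<and> x \<noteq> z"
proof -
  obtain p q :: 'p where "p \<noteq> q"
    using assms card_le_Suc0_iff_eq[of "UNIV :: 'p set"] by fastforce
  then show ?thesis by (intro exI[of _ "{}"] exI[of _ "{p}"] exI[of _ "{q}"]) auto
qed

section \<open>Weak orders\<close>

definition strict :: "('w \<Rightarrow> 'w \<Rightarrow> bool) \<Rightarrow> 'w \<Rightarrow> 'w \<Rightarrow> bool" where
  "strict R x y \<longleftrightarrow> R x y \<and> \<not> R y x"

definition agree_on :: "('w \<Rightarrow> 'w \<Rightarrow> bool) \<Rightarrow> ('w \<Rightarrow> 'w \<Rightarrow> bool) \<Rightarrow> 'w \<Rightarrow> 'w \<Rightarrow> bool" where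
  "agree_on R R' x y \<longleftrightarrow> (R x y \<longleftrightarrow> R' x y) \<and> (R y x \<longleftrightarrow> R' y x)"

lemma strict_weak_trans: "transp R \<Longrightarrow> strict R x y \<Longrightarrow> R y z \<Longrightarrow> strict R x z"
  unfolding strict_def by (metis transpD)

lemma weak_strict_trans: "transp R \<Longrightarrow> R x y \<Longrightarrow> strict R y z \<Longrightarrow> strict R x z"
  unfolding strict_def by (metis transpD)

lemma strict_trans: "transp R \<Longrightarrow> strict R x y \<Longrightarrow> strict R y z \<Longrightarrow> strict R x z"
  unfolding strict_def by (metis transpD)

lemma not_strict_imp_weak: "totalp R \<Longrightarrow> x \<noteq> y \<Longrightarrow> \<not> strict R x y \<Longrightarrow> R y x"
  unfolding strict_def by (metis totalpD)

lemma strict_conversep: "strict R\<inverse>\<inverse> x y \<longleftrightarrow> strict R y x"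
  unfolding strict_def by simp

lemma agree_on_commute: "agree_on R R' x y \<longleftrightarrow> agree_on R' R x y"
  unfolding agree_on_def by blast

lemma agree_on_conversep: "agree_on R\<inverse>\<inverse> R'\<inverse>\<inverse> x y \<longleftrightarrow> agree_on R R' x y"
  unfolding agree_on_def by auto

lemma agree_on_if_strict: "strict R x y \<Longrightarrow> strict R' x y \<Longrightarrow> agree_on R R' x y"
  unfolding agree_on_def strict_def by blast

lemma strict_iff_if_agree_on: "agree_on R R' x y \<Longrightarrow> strict R x y \<longleftrightarrow> strict R' x y"
  unfolding agree_on_def strict_def by blast

lemma exists_map_with_dom:
  assumes "\<And>j. j \<in> N \<Longrightarrow> \<exists>e. P j e"
  shows "\<exists>\<Phi>. dom \<Phi> = N \<and> (\<forall>j\<in>N. P j (the (\<Phi> j)))"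
proof -
  obtain f where "\<forall>j\<in>N. P j (f j)" using assms by metis
  then show ?thesis by (intro exI[of _ "(Some \<circ> f) |` N"]) auto
qed

lemma all_pairs_if_spreads:
  fixes R :: "'w \<Rightarrow> 'w \<Rightarrow> bool"
  assumes ab: "R a b" "a \<noteq> b"
    and spread: "\<And>a b c. R a b \<Longrightarrow> a \<noteq> b \<Longrightarrow> c \<noteq> a \<Longrightarrow> c \<noteq> b \<Longrightarrow> R a c \<and> R c b"
    and third: "\<And>a b :: 'w. \<exists>c. c \<noteq> a \<and> c \<noteq> b"
    and uv: "u \<noteq> v"
  shows "R u v"
proof -
  have from_a: "R a v" if "v \<noteq> a" for v
  proof (cases "v = b")
    case False
    then show ?thesis using spread[OF ab, of v] that by blast
  qed (use ab in simp)
  have off_a: "R u v" if "v \<noteq> a" "u \<noteq> v" for u v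
  proof (cases "u = a")
    case False
    then show ?thesis using spread[OF from_a[OF that(1)] that(1)[symmetric], of u] that by blast
  qed (use from_a that in simp)
  show ?thesis
  proof (cases "v = a")
    case True
    obtain c where c: "c \<noteq> a" "c \<noteq> u" using third[of a u] by blast
    then have "R u c" using off_a[of c u] by blast
    then show ?thesis using spread[of u c a] c uv True by blast
  qed (use off_a uv in blast)
qed

section \<open>Arrow's theorem\<close>

text \<open>A social welfare function on a rich domain: voter j casting ballot e holds the weak
  order ind j e, and a profile \<Phi> on the society N yields the social weak order soc \<Phi>.\<close>
locale arrow_setting =
  fixes N :: "'a set"
    and ind :: "'a \<Rightarrow> 'e \<Rightarrow> 'w \<Rightarrow> 'w \<Rightarrow> bool"
    and soc :: "('a \<rightharpoonup> 'e) \<Rightarrow> 'w \<Rightarrow> 'w \<Rightarrow> bool"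
  assumes finite_society: "finite N"
    and three_alternatives: "\<exists>x y z :: 'w. x \<noteq> y \<and> y \<noteq> z \<and> x \<noteq> z"
    and ind_totalp: "totalp (ind j e)" and ind_transp: "transp (ind j e)"
    and soc_totalp: "dom \<Phi> = N \<Longrightarrow> totalp (soc \<Phi>)"
    and soc_transp: "dom \<Phi> = N \<Longrightarrow> transp (soc \<Phi>)"
    and IIA: "dom \<Phi> = N \<Longrightarrow> dom \<Psi> = N \<Longrightarrow>
      \<forall>j\<in>N. agree_on (ind j (the (\<Phi> j))) (ind j (the (\<Psi> j))) x y \<Longrightarrow>
      agree_on (soc \<Phi>) (soc \<Psi>) x y"
    and pareto: "dom \<Phi> = N \<Longrightarrow> \<forall>j\<in>N. strict (ind j (the (\<Phi> j))) x y \<Longrightarrow> strict (soc \<Phi>) x y"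
    and ballot_chain: "x \<noteq> y \<Longrightarrow> y \<noteq> z \<Longrightarrow> x \<noteq> z \<Longrightarrow>
      \<exists>e. strict (ind j e) x y \<and> strict (ind j e) y z"
    and ballot_tie_top: "x \<noteq> y \<Longrightarrow> y \<noteq> z \<Longrightarrow> x \<noteq> z \<Longrightarrow>
      \<exists>e. ind j e x y \<and> ind j e y x \<and> strict (ind j e) y z"
    and ballot_tie_bottom: "x \<noteq> y \<Longrightarrow> y \<noteq> z \<Longrightarrow> x \<noteq> z \<Longrightarrow>
      \<exists>e. strict (ind j e) x y \<and> ind j e y z \<and> ind j e z y"
begin

definition decisive_for :: "'a set \<Rightarrow> 'w \<Rightarrow> 'w \<Rightarrow> bool" where
  "decisive_for G x y \<longleftrightarrow> (\<forall>\<Phi>. dom \<Phi> = N \<longrightarrow>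
     (\<forall>j\<in>G. strict (ind j (the (\<Phi> j))) x y) \<longrightarrow> strict (soc \<Phi>) x y)"

definition almost_decisive_for :: "'a set \<Rightarrow> 'w \<Rightarrow> 'w \<Rightarrow> bool" where
  "almost_decisive_for G x y \<longleftrightarrow> (\<forall>\<Phi>. dom \<Phi> = N \<longrightarrow>
     (\<forall>j\<in>G. strict (ind j (the (\<Phi> j))) x y) \<longrightarrow>
     (\<forall>j\<in>N - G. strict (ind j (the (\<Phi> j))) y x) \<longrightarrow> strict (soc \<Phi>) x y)"

definition decisive :: "'a set \<Rightarrow> bool" where
  "decisive G \<longleftrightarrow> (\<forall>x y. x \<noteq> y \<longrightarrow> decisive_for G x y)"

lemma third_alternative: "\<exists>c :: 'w. c \<noteq> a \<and> c \<noteq> b"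
  using three_alternatives by metis

lemma strict_soc_if_agree:
  assumes "dom \<Phi> = N" "dom \<Psi> = N"
    and "\<forall>j\<in>N. agree_on (ind j (the (\<Phi> j))) (ind j (the (\<Psi> j))) x y"
    and "strict (soc \<Psi>) x y"
  shows "strict (soc \<Phi>) x y"
  using strict_iff_if_agree_on[OF IIA[OF assms(1-3)]] assms(4) by simp

lemma ballot_with_top:
  assumes "x \<noteq> y" "y \<noteq> z" "x \<noteq> z"
  shows "\<exists>e. strict (ind j e) y x \<and> strict (ind j e) y z \<and> agree_on (ind j e) (ind j e0) x z"
proof -
  consider "strict (ind j e0) x z" | "strict (ind j e0) z x" | "ind j e0 x z" "ind j e0 z x"
    using totalpD[OF ind_totalp assms(3)] unfolding strict_def by blast
  then show ?thesis
  proof cases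
    case 1
    obtain e where yx: "strict (ind j e) y x" and xz: "strict (ind j e) x z"
      using ballot_chain[of y x z] assms by blast
    have "strict (ind j e) y z" using strict_trans[OF ind_transp yx xz] .
    moreover have "agree_on (ind j e) (ind j e0) x z" using agree_on_if_strict[OF xz 1] .
    ultimately show ?thesis using yx by blast
  next
    case 2
    obtain e where yz: "strict (ind j e) y z" and zx: "strict (ind j e) z x"
      using ballot_chain[of y z x] assms by blast
    have "strict (ind j e) y x" using strict_trans[OF ind_transp yz zx] .
    moreover have "agree_on (ind j e) (ind j e0) x z"
      using agree_on_if_strict[OF zx 2] unfolding agree_on_def by blast
    ultimately show ?thesis using yz by blast
  next
    case 3
    obtain e where yx: "strict (ind j e) y x" and "ind j e x z" "ind j e z x"
      using ballot_tie_bottom[of y x z] assms by blast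
    moreover have "strict (ind j e) y z" using strict_weak_trans[OF ind_transp yx \<open>ind j e x z\<close>] .
    moreover have "agree_on (ind j e) (ind j e0) x z"
      using 3 \<open>ind j e x z\<close> \<open>ind j e z x\<close> unfolding agree_on_def by blast
    ultimately show ?thesis by blast
  qed
qed

lemma exists_expansion_profile:
  assumes "x \<noteq> y" "y \<noteq> z" "x \<noteq> z" "G \<subseteq> N"
  shows "\<exists>\<Psi>. dom \<Psi> = N
    \<and> (\<forall>j\<in>G. strict (ind j (the (\<Psi> j))) x y \<and> strict (ind j (the (\<Psi> j))) y z)
    \<and> (\<forall>j\<in>N - G. strict (ind j (the (\<Psi> j))) y x \<and> strict (ind j (the (\<Psi> j))) y z
        \<and> agree_on (ind j (the (\<Psi> j))) (ind j (the (\<Phi> j))) x z)"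
proof -
  define P where "P j e \<longleftrightarrow> (if j \<in> G
      then strict (ind j e) x y \<and> strict (ind j e) y z
      else strict (ind j e) y x \<and> strict (ind j e) y z \<and> agree_on (ind j e) (ind j (the (\<Phi> j))) x z)"
    for j e
  have "\<exists>e. P j e" for j
    using ballot_chain[OF assms(1-3), of j] ballot_with_top[OF assms(1-3), of j "the (\<Phi> j)"]
    unfolding P_def by (cases "j \<in> G") simp_all
  then obtain \<Psi> where "dom \<Psi> = N" "\<forall>j\<in>N. P j (the (\<Psi> j))"
    using exists_map_with_dom[of N P] by blast
  with assms(4) show ?thesis
    unfolding P_def by (intro exI[of _ \<Psi>]) (auto simp: subset_iff)
qed

lemma decisive_for_right:
  assumes "G \<subseteq> N" and ad: "almost_decisive_for G x y" and xyz: "x \<noteq> y" "y \<noteq> z" "x \<noteq> z"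
  shows "decisive_for G x z"
  unfolding decisive_for_def
proof (intro allI impI)
  fix \<Phi> :: "'a \<rightharpoonup> 'e" assume \<Phi>: "dom \<Phi> = N" and xz: "\<forall>j\<in>G. strict (ind j (the (\<Phi> j))) x z"
  obtain \<Psi> where \<Psi>: "dom \<Psi> = N"
    and in_G: "\<forall>j\<in>G. strict (ind j (the (\<Psi> j))) x y \<and> strict (ind j (the (\<Psi> j))) y z"
    and out_G: "\<forall>j\<in>N - G. strict (ind j (the (\<Psi> j))) y x \<and> strict (ind j (the (\<Psi> j))) y z
        \<and> agree_on (ind j (the (\<Psi> j))) (ind j (the (\<Phi> j))) x z"
    using exists_expansion_profile[OF xyz assms(1), of \<Phi>] by blast
  have "strict (soc \<Psi>) x y"
    using ad \<Psi> in_G out_G unfolding almost_decisive_for_def by blast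
  moreover have "strict (soc \<Psi>) y z"
    using pareto[OF \<Psi>] in_G out_G by blast
  ultimately have \<Psi>_xz: "strict (soc \<Psi>) x z"
    by (rule strict_trans[OF soc_transp[OF \<Psi>]])
  have "\<forall>j\<in>N. agree_on (ind j (the (\<Phi> j))) (ind j (the (\<Psi> j))) x z"
  proof
    fix j assume "j \<in> N"
    show "agree_on (ind j (the (\<Phi> j))) (ind j (the (\<Psi> j))) x z"
    proof (cases "j \<in> G")
      case True
      then have "strict (ind j (the (\<Psi> j))) x z"
        using in_G strict_trans[OF ind_transp] by blast
      with True xz show ?thesis by (simp add: agree_on_if_strict)
    next
      case False
      with \<open>j \<in> N\<close> out_G show ?thesis by (simp add: agree_on_commute)
    qed
  qed
  from strict_soc_if_agree[OF \<Phi> \<Psi> this \<Psi>_xz] show "strict (soc \<Phi>) x z" .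
qed

text \<open>Reversing all orders preserves the hypotheses and swaps the two halves of field expansion.\<close>
lemma arrow_setting_conversep: "arrow_setting N (\<lambda>j e. (ind j e)\<inverse>\<inverse>) (\<lambda>\<Phi>. (soc \<Phi>)\<inverse>\<inverse>)"
proof unfold_locales
  fix j e
  show "totalp (ind j e)\<inverse>\<inverse>" "transp (ind j e)\<inverse>\<inverse>"
    using ind_totalp ind_transp by simp_all
next
  fix \<Phi> :: "'a \<rightharpoonup> 'e" assume "dom \<Phi> = N"
  then show "totalp (soc \<Phi>)\<inverse>\<inverse>" "transp (soc \<Phi>)\<inverse>\<inverse>"
    using soc_totalp soc_transp by simp_all
next
  fix \<Phi> \<Psi> :: "'a \<rightharpoonup> 'e" and x y
  assume "dom \<Phi> = N" "dom \<Psi> = N"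
    "\<forall>j\<in>N. agree_on (ind j (the (\<Phi> j)))\<inverse>\<inverse> (ind j (the (\<Psi> j)))\<inverse>\<inverse> x y"
  then show "agree_on (soc \<Phi>)\<inverse>\<inverse> (soc \<Psi>)\<inverse>\<inverse> x y"
    unfolding agree_on_conversep by (rule IIA)
next
  fix \<Phi> :: "'a \<rightharpoonup> 'e" and x y
  assume "dom \<Phi> = N" "\<forall>j\<in>N. strict (ind j (the (\<Phi> j)))\<inverse>\<inverse> x y"
  then show "strict (soc \<Phi>)\<inverse>\<inverse> x y"
    unfolding strict_conversep by (rule pareto)
next
  fix x y z :: 'w and j assume "x \<noteq> y" "y \<noteq> z" "x \<noteq> z"
  then show "\<exists>e. strict (ind j e)\<inverse>\<inverse> x y \<and> strict (ind j e)\<inverse>\<inverse> y z"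
    "\<exists>e. (ind j e)\<inverse>\<inverse> x y \<and> (ind j e)\<inverse>\<inverse> y x \<and> strict (ind j e)\<inverse>\<inverse> y z"
    "\<exists>e. strict (ind j e)\<inverse>\<inverse> x y \<and> (ind j e)\<inverse>\<inverse> y z \<and> (ind j e)\<inverse>\<inverse> z y"
    unfolding strict_conversep conversep_iff
    using ballot_chain[of z y x j] ballot_tie_bottom[of z y x j] ballot_tie_top[of z y x j] by blast+
qed (fact finite_society three_alternatives)+

lemma decisive_for_left:
  assumes "G \<subseteq> N" "almost_decisive_for G x y" "x \<noteq> y" "y \<noteq> z" "x \<noteq> z"
  shows "decisive_for G z y"
proof -
  interpret dual: arrow_setting N "\<lambda>j e. (ind j e)\<inverse>\<inverse>" "\<lambda>\<Phi>. (soc \<Phi>)\<inverse>\<inverse>"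
    by (rule arrow_setting_conversep)
  have "dual.almost_decisive_for G y x"
    using assms(2) unfolding dual.almost_decisive_for_def almost_decisive_for_def strict_conversep .
  from dual.decisive_for_right[OF assms(1) this] assms(3-5) show ?thesis
    unfolding dual.decisive_for_def decisive_for_def strict_conversep by blast
qed

lemma decisive_if_almost_decisive:
  assumes "G \<subseteq> N" "almost_decisive_for G x y" "x \<noteq> y"
  shows "decisive G"
proof -
  obtain c where c: "c \<noteq> x" "c \<noteq> y" using third_alternative by blast
  have "decisive_for G x c"
    using decisive_for_right[OF assms, of c] c by simp
  moreover have "decisive_for G a c \<and> decisive_for G c b"
    if "decisive_for G a b" "a \<noteq> b" "c \<noteq> a" "c \<noteq> b" for a b c
  proof -
    have "almost_decisive_for G a b"
      using that(1) unfolding decisive_for_def almost_decisive_for_def by blast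
    note spread = assms(1) this that(2) that(4)[symmetric] that(3)[symmetric]
    show ?thesis using decisive_for_right[OF spread] decisive_for_left[OF spread] ..
  qed
  ultimately show ?thesis
    unfolding decisive_def
    using all_pairs_if_spreads[of "decisive_for G" x c] c(1) third_alternative by metis
qed

lemma almost_decisive_if_witness:
  assumes \<Psi>: "dom \<Psi> = N" and "\<forall>j\<in>G. strict (ind j (the (\<Psi> j))) x y"
    and "\<forall>j\<in>N - G. strict (ind j (the (\<Psi> j))) y x" and "strict (soc \<Psi>) x y"
  shows "almost_decisive_for G x y"
  unfolding almost_decisive_for_def
proof (intro allI impI)
  fix \<Phi> :: "'a \<rightharpoonup> 'e"
  assume \<Phi>: "dom \<Phi> = N" and "\<forall>j\<in>G. strict (ind j (the (\<Phi> j))) x y"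
    and "\<forall>j\<in>N - G. strict (ind j (the (\<Phi> j))) y x"
  with assms(2,3) have "\<forall>j\<in>N. agree_on (ind j (the (\<Phi> j))) (ind j (the (\<Psi> j))) x y"
    unfolding agree_on_def strict_def by blast
  from strict_soc_if_agree[OF \<Phi> \<Psi> this assms(4)] show "strict (soc \<Phi>) x y" .
qed

lemma not_decisive_empty: "\<not> decisive {}"
proof
  assume empty: "decisive {}"
  obtain x y :: 'w where "x \<noteq> y" using three_alternatives by blast
  with empty have "decisive_for {} x y" "decisive_for {} y x"
    unfolding decisive_def by simp_all
  moreover have "dom ((\<lambda>_. Some undefined) |` N :: 'a \<rightharpoonup> 'e) = N" by simp
  ultimately show False
    unfolding decisive_for_def strict_def by blast
qed

lemma decisive_society: "decisive N"
  unfolding decisive_def decisive_for_def by (simp add: pareto)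

lemma exists_condorcet_profile:
  assumes "x \<noteq> y" "y \<noteq> z" "x \<noteq> z" "G1 \<union> G2 \<subseteq> N" "G1 \<inter> G2 = {}"
  shows "\<exists>\<Psi>. dom \<Psi> = N
    \<and> (\<forall>j\<in>G1. strict (ind j (the (\<Psi> j))) x y \<and> strict (ind j (the (\<Psi> j))) y z)
    \<and> (\<forall>j\<in>G2. strict (ind j (the (\<Psi> j))) z x \<and> strict (ind j (the (\<Psi> j))) x y)
    \<and> (\<forall>j\<in>N - G1 - G2. strict (ind j (the (\<Psi> j))) y z \<and> strict (ind j (the (\<Psi> j))) z x)"
proof -
  define P where "P j e \<longleftrightarrow> (if j \<in> G1 then strict (ind j e) x y \<and> strict (ind j e) y z
      else if j \<in> G2 then strict (ind j e) z x \<and> strict (ind j e) x y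
      else strict (ind j e) y z \<and> strict (ind j e) z x)" for j e
  have "\<exists>e. P j e" for j
    using ballot_chain[OF assms(1-3), of j]
      ballot_chain[OF assms(3)[symmetric] assms(1) assms(2)[symmetric], of j]
      ballot_chain[OF assms(2) assms(3)[symmetric] assms(1)[symmetric], of j]
    unfolding P_def by (cases "j \<in> G1"; cases "j \<in> G2") simp_all
  then obtain \<Psi> where "dom \<Psi> = N" "\<forall>j\<in>N. P j (the (\<Psi> j))"
    using exists_map_with_dom[of N P] by blast
  moreover have "G1 \<subseteq> N" "G2 \<subseteq> N" "\<And>j. j \<in> G2 \<Longrightarrow> j \<notin> G1" using assms(4,5) by blast+
  ultimately show ?thesis
    unfolding P_def by (intro exI[of _ \<Psi>]) (auto simp: subset_iff)
qed

lemma decisive_split: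
  assumes "G1 \<union> G2 \<subseteq> N" "G1 \<inter> G2 = {}" "decisive (G1 \<union> G2)"
  shows "decisive G1 \<or> decisive G2"
proof -
  obtain x y z :: 'w where xyz: "x \<noteq> y" "y \<noteq> z" "x \<noteq> z" using three_alternatives by blast
  then obtain \<Psi> where \<Psi>: "dom \<Psi> = N"
    and G1: "\<forall>j\<in>G1. strict (ind j (the (\<Psi> j))) x y \<and> strict (ind j (the (\<Psi> j))) y z"
    and G2: "\<forall>j\<in>G2. strict (ind j (the (\<Psi> j))) z x \<and> strict (ind j (the (\<Psi> j))) x y"
    and others: "\<forall>j\<in>N - G1 - G2. strict (ind j (the (\<Psi> j))) y z \<and> strict (ind j (the (\<Psi> j))) z x"
    using exists_condorcet_profile[OF _ _ _ assms(1,2)] by blast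
  have xy: "strict (soc \<Psi>) x y"
    using assms(3) \<Psi> G1 G2 xyz(1) unfolding decisive_def decisive_for_def by blast
  consider "strict (soc \<Psi>) x z" | "soc \<Psi> z x"
    using not_strict_imp_weak[OF soc_totalp[OF \<Psi>] xyz(3)] by blast
  then show ?thesis
  proof cases
    case 1
    have "\<forall>j\<in>G1. strict (ind j (the (\<Psi> j))) x z"
      using G1 strict_trans[OF ind_transp] by blast
    moreover have "\<forall>j\<in>N - G1. strict (ind j (the (\<Psi> j))) z x"
      using G2 others by blast
    ultimately have "almost_decisive_for G1 x z"
      using almost_decisive_if_witness[OF \<Psi> _ _ 1] by blast
    then show ?thesis using decisive_if_almost_decisive assms(1) xyz(3) by blast
  next
    case 2
    have "\<forall>j\<in>G2. strict (ind j (the (\<Psi> j))) z y"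
      using G2 strict_trans[OF ind_transp] by blast
    moreover have "\<forall>j\<in>N - G2. strict (ind j (the (\<Psi> j))) y z"
      using G1 others by blast
    moreover have "strict (soc \<Psi>) z y"
      using weak_strict_trans[OF soc_transp[OF \<Psi>] 2 xy] .
    ultimately have "almost_decisive_for G2 z y"
      using almost_decisive_if_witness[OF \<Psi>] by blast
    then show ?thesis using decisive_if_almost_decisive assms(1) xyz(2) by blast
  qed
qed

lemma exists_dictator: "\<exists>d\<in>N. decisive {d}"
proof -
  have "G \<subseteq> N \<Longrightarrow> decisive G \<Longrightarrow> \<exists>d\<in>G. decisive {d}" if "finite G" for G
    using that
  proof (induction G rule: finite_induct)
    case empty
    then show ?case using not_decisive_empty by blast
  next
    case (insert d G)
    then have "decisive {d} \<or> decisive G"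
      using decisive_split[of "{d}" G] by simp
    then show ?case using insert by blast
  qed
  then show ?thesis using finite_society decisive_society by blast
qed

lemma strict_if_dictator:
  assumes "decisive {d}" "dom \<Phi> = N" "strict (ind d (the (\<Phi> d))) x y"
  shows "strict (soc \<Phi>) x y"
proof (cases "x = y")
  case True
  with assms(3) show ?thesis unfolding strict_def by simp
next
  case False
  with assms show ?thesis unfolding decisive_def decisive_for_def by simp
qed

end

section \<open>Fusion operators as social welfare functions\<close>

lemma profile_singleton: "profile [j \<mapsto> e]"
  unfolding profile_def society_def by simp

lemma profile_if_dom_eq: "profile \<Phi> \<Longrightarrow> dom \<Psi> = dom \<Phi> \<Longrightarrow> profile \<Psi>"
  unfolding profile_def by simp

lemma profile_if_dom_society: "society N \<Longrightarrow> dom \<Phi> = N \<Longrightarrow> profile \<Phi>"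
  unfolding profile_def by simp

locale ES_fusion =
  fixes B :: "'e \<Rightarrow> 'p::finite form" and nab :: "('a::linorder \<rightharpoonup> 'e) \<Rightarrow> 'e \<Rightarrow> 'e"
  assumes epistemic_space: "epistemic_space B" and basic_fusion: "ES_basic_fusion B nab"
begin

lemma models_B_nonempty: "models (B e) \<noteq> {}"
  using epistemic_space unfolding epistemic_space_def consistent_iff_models by auto

lemma exists_state: "S \<noteq> {} \<Longrightarrow> \<exists>e. models (B e) = S"
proof -
  assume "S \<noteq> {}"
  moreover obtain f where "models f = S" using definable by blast
  ultimately obtain e where "B e \<equiv>\<^sub>F f"
    using epistemic_space unfolding epistemic_space_def consistent_iff_models by blast
  with \<open>models f = S\<close> show ?thesis unfolding equiv_form_def by blast
qed

text \<open>Arbitrary for S = {}, which no state represents.\<close>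
definition state :: "'p set set \<Rightarrow> 'e" where
  "state S = (SOME e. models (B e) = S)"

lemma models_state: "S \<noteq> {} \<Longrightarrow> models (B (state S)) = S"
  unfolding state_def by (rule someI_ex) (rule exists_state)

text \<open>By (ESF2) this does not depend on the state chosen to represent S, see models_nab.\<close>
definition choice :: "('a \<rightharpoonup> 'e) \<Rightarrow> 'p set set \<Rightarrow> 'p set set" where
  "choice \<Phi> S = models (B (nab \<Phi> (state S)))"

lemma models_nab: "profile \<Phi> \<Longrightarrow> models (B (nab \<Phi> E)) = choice \<Phi> (models (B E))"
  using basic_fusion models_state[OF models_B_nonempty, of E]
  unfolding ES_basic_fusion_def equiv_form_def equiv_profile_def choice_def by blast

lemma choice_nonempty: "choice \<Phi> S \<noteq> {}"
  unfolding choice_def by (rule models_B_nonempty)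

lemma choice_subset: "profile \<Phi> \<Longrightarrow> S \<noteq> {} \<Longrightarrow> choice \<Phi> S \<subseteq> S"
  using basic_fusion models_state[of S] unfolding ES_basic_fusion_def entails_def choice_def by blast

lemma choice_singleton: "profile \<Phi> \<Longrightarrow> choice \<Phi> {x} = {x}"
  using choice_subset[of \<Phi> "{x}"] choice_nonempty[of \<Phi> "{x}"] by auto

lemma models_nab_conj:
  assumes "profile \<Phi>" "models (B E) = models (B E') \<inter> models (B E'')"
    and "models (B (nab \<Phi> E')) \<inter> models (B E'') \<noteq> {}"
  shows "models (B (nab \<Phi> E)) = models (B (nab \<Phi> E')) \<inter> models (B E'')"
proof
  show "models (B (nab \<Phi> E')) \<inter> models (B E'') \<subseteq> models (B (nab \<Phi> E))"
    using basic_fusion assms(1,2)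
    unfolding ES_basic_fusion_def equiv_form_def entails_def models_FAnd by blast
  show "models (B (nab \<Phi> E)) \<subseteq> models (B (nab \<Phi> E')) \<inter> models (B E'')"
    using basic_fusion assms
    unfolding ES_basic_fusion_def equiv_form_def entails_def consistent_iff_models models_FAnd
    by blast
qed

lemma choice_restrict:
  assumes "profile \<Phi>" "S \<noteq> {}" "S \<subseteq> T" "choice \<Phi> T \<inter> S \<noteq> {}"
  shows "choice \<Phi> S = choice \<Phi> T \<inter> S"
proof -
  have models: "models (B (state S)) = S" "models (B (state T)) = T"
    using assms(2,3) models_state by auto
  then have "models (B (state S)) = models (B (state T)) \<inter> models (B (state S))"
    using assms(3) by auto
  from models_nab_conj[OF assms(1) this] show ?thesis
    using assms(4) unfolding choice_def models by blast
qed

definition pref :: "('a \<rightharpoonup> 'e) \<Rightarrow> 'p set \<Rightarrow> 'p set \<Rightarrow> bool" where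
  "pref \<Phi> x y \<longleftrightarrow> x \<in> choice \<Phi> {x, y}"

lemma pref_total: "profile \<Phi> \<Longrightarrow> pref \<Phi> x y \<or> pref \<Phi> y x"
  using choice_subset[of \<Phi> "{x, y}"] choice_nonempty[of \<Phi> "{x, y}"]
  unfolding pref_def by (auto simp: insert_commute)

lemma pref_trans:
  assumes \<Phi>: "profile \<Phi>" and "pref \<Phi> x y" "pref \<Phi> y z"
  shows "pref \<Phi> x z"
proof -
  let ?T = "{x, y, z}"
  have "x \<in> choice \<Phi> ?T \<Longrightarrow> pref \<Phi> x z"
    using choice_restrict[OF \<Phi>, of "{x, z}" ?T] unfolding pref_def by auto
  moreover have "y \<in> choice \<Phi> ?T \<Longrightarrow> x \<in> choice \<Phi> ?T"
    using choice_restrict[OF \<Phi>, of "{x, y}" ?T] assms(2) unfolding pref_def by auto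
  moreover have "z \<in> choice \<Phi> ?T \<Longrightarrow> y \<in> choice \<Phi> ?T"
    using choice_restrict[OF \<Phi>, of "{y, z}" ?T] assms(3) unfolding pref_def by auto
  ultimately show ?thesis
    using choice_subset[OF \<Phi>, of ?T] choice_nonempty[of \<Phi> ?T] by blast
qed

lemma choice_eq_maximal:
  assumes \<Phi>: "profile \<Phi>" and "S \<noteq> {}"
  shows "choice \<Phi> S = {x \<in> S. \<forall>y\<in>S. pref \<Phi> x y}"
proof (intro equalityI subsetI)
  fix x assume x: "x \<in> choice \<Phi> S"
  have "pref \<Phi> x y" if "y \<in> S" for y
    using x that choice_restrict[OF \<Phi>, of "{x, y}" S] choice_subset[OF assms]
    unfolding pref_def by blast
  with x show "x \<in> {x \<in> S. \<forall>y\<in>S. pref \<Phi> x y}"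
    using choice_subset[OF assms] by blast
next
  fix x assume x: "x \<in> {x \<in> S. \<forall>y\<in>S. pref \<Phi> x y}"
  obtain u where u: "u \<in> choice \<Phi> S" using choice_nonempty by blast
  then have "choice \<Phi> {x, u} = choice \<Phi> S \<inter> {x, u}"
    using x choice_restrict[OF \<Phi>, of "{x, u}" S] choice_subset[OF assms] by blast
  then show "x \<in> choice \<Phi> S"
    using x u choice_subset[OF assms] unfolding pref_def by auto
qed

lemma pref_totalp: "profile \<Phi> \<Longrightarrow> totalp (pref \<Phi>)"
  using pref_total by (blast intro: totalpI)

lemma pref_transp: "profile \<Phi> \<Longrightarrow> transp (pref \<Phi>)"
  using pref_trans by (blast intro: transpI)

lemma agree_on_pref_iff:
  assumes "profile \<Phi>" "profile \<Psi>"
  shows "agree_on (pref \<Phi>) (pref \<Psi>) x y \<longleftrightarrow> choice \<Phi> {x, y} = choice \<Psi> {x, y}"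
  using choice_subset[OF assms(1), of "{x, y}"] choice_subset[OF assms(2), of "{x, y}"]
  unfolding agree_on_def pref_def by (auto simp: insert_commute)

lemma IIA_if_ESF_I:
  assumes "ESF_I B nab" and \<Phi>: "profile \<Phi>" and dom: "dom \<Psi> = dom \<Phi>"
    and agree: "\<forall>j\<in>dom \<Phi>. agree_on (pref [j \<mapsto> the (\<Phi> j)]) (pref [j \<mapsto> the (\<Psi> j)]) x y"
  shows "agree_on (pref \<Phi>) (pref \<Psi>) x y"
proof -
  have "B (nab [j \<mapsto> the (\<Phi> j)] E) \<equiv>\<^sub>F B (nab [j \<mapsto> the (\<Psi> j)] E)"
    if "B E \<turnstile> B (state {x, y})" "j \<in> dom \<Phi>" for E j
  proof -
    have "models (B E) \<in> {{x}, {y}, {x, y}}"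
      using that(1) models_B_nonempty[of E] unfolding entails_def models_state[OF insert_not_empty]
      by blast
    moreover have "choice [j \<mapsto> the (\<Phi> j)] {x, y} = choice [j \<mapsto> the (\<Psi> j)] {x, y}"
      using agree that(2) agree_on_pref_iff[OF profile_singleton profile_singleton] by blast
    ultimately show ?thesis
      unfolding equiv_form_def models_nab[OF profile_singleton]
      by (auto simp: choice_singleton[OF profile_singleton])
  qed
  then have "B (nab \<Phi> (state {x, y})) \<equiv>\<^sub>F B (nab \<Psi> (state {x, y}))"
    using assms(1) \<Phi> dom unfolding ESF_I_def by blast
  then show ?thesis
    unfolding agree_on_pref_iff[OF \<Phi> profile_if_dom_eq[OF \<Phi> dom]] equiv_form_def choice_def .
qed

lemma pref_uniform:
  assumes "ESF_U B nab" "profile \<Phi>" "\<forall>i\<in>dom \<Phi>. \<Phi> i = Some e" "j \<in> dom \<Phi>"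
  shows "pref \<Phi> = pref [j \<mapsto> e]"
proof -
  have "\<forall>i\<in>dom \<Phi>. \<forall>k\<in>dom \<Phi>. \<Phi> i = \<Phi> k" using assms(3) by simp
  then have "B (nab \<Phi> E) \<equiv>\<^sub>F B (nab [j \<mapsto> the (\<Phi> j)] E)" for E
    using assms(1,2,4) unfolding ESF_U_def by blast
  moreover have "the (\<Phi> j) = e" using assms(3,4) by simp
  ultimately have "choice \<Phi> S = choice [j \<mapsto> e] S" for S
    unfolding equiv_form_def choice_def by simp
  then show ?thesis unfolding pref_def by blast
qed

lemma pareto_if_ESF_U_I:
  assumes U: "ESF_U B nab" and I: "ESF_I B nab" and \<Phi>: "profile \<Phi>"
    and unanimous: "\<forall>j\<in>dom \<Phi>. strict (pref [j \<mapsto> the (\<Phi> j)]) x y"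
  shows "strict (pref \<Phi>) x y"
proof -
  obtain j0 where j0: "j0 \<in> dom \<Phi>" using \<Phi> unfolding profile_def society_def by blast
  define e0 where "e0 = the (\<Phi> j0)"
  define \<Phi>0 where "\<Phi>0 = (\<lambda>_. Some e0) |` dom \<Phi>"
  have dom0: "dom \<Phi>0 = dom \<Phi>" unfolding \<Phi>0_def by simp
  have \<Phi>0: "profile \<Phi>0" using profile_if_dom_eq[OF \<Phi> dom0] .
  have pref0: "pref \<Phi>0 = pref [j \<mapsto> e0]" if "j \<in> dom \<Phi>" for j
    using pref_uniform[OF U \<Phi>0] that dom0 unfolding \<Phi>0_def by simp
  have "agree_on (pref \<Phi>) (pref \<Phi>0) x y"
  proof (rule IIA_if_ESF_I[OF I \<Phi> dom0], intro ballI)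
    fix j assume j: "j \<in> dom \<Phi>"
    have "pref [j \<mapsto> the (\<Phi>0 j)] = pref [j0 \<mapsto> the (\<Phi> j0)]"
      using pref0[OF j] pref0[OF j0] j unfolding \<Phi>0_def e0_def by simp
    then have "strict (pref [j \<mapsto> the (\<Phi>0 j)]) x y" using unanimous j0 by simp
    with unanimous j show "agree_on (pref [j \<mapsto> the (\<Phi> j)]) (pref [j \<mapsto> the (\<Phi>0 j)]) x y"
      by (simp add: agree_on_if_strict)
  qed
  moreover have "strict (pref \<Phi>0) x y"
    using pref0[OF j0] unanimous j0 unfolding e0_def by simp
  ultimately show ?thesis by (simp add: strict_iff_if_agree_on)
qed

lemma pref_pair_if_choice:
  "choice \<Phi> {x, y} = A \<Longrightarrow> (pref \<Phi> x y \<longleftrightarrow> x \<in> A) \<and> (pref \<Phi> y x \<longleftrightarrow> y \<in> A)"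
  unfolding pref_def by (auto simp: insert_commute)

lemma ballots_if_ESF_SD:
  assumes "ESF_SD B nab" "x \<noteq> y" "y \<noteq> z" "x \<noteq> z"
  shows "\<exists>e. strict (pref [j \<mapsto> e]) x y \<and> strict (pref [j \<mapsto> e]) y z"
    and "\<exists>e. pref [j \<mapsto> e] x y \<and> pref [j \<mapsto> e] y x \<and> strict (pref [j \<mapsto> e]) y z"
    and "\<exists>e. strict (pref [j \<mapsto> e]) x y \<and> pref [j \<mapsto> e] y z \<and> pref [j \<mapsto> e] z y"
proof -
  have xy: "models (B (state {x, y})) = {x, y}" and yz: "models (B (state {y, z})) = {y, z}"
    by (simp_all add: models_state)
  note SD = assms(1)[unfolded ESF_SD_def, rule_format, OF assms(2-4) xy yz, of j,
      unfolded models_nab[OF profile_singleton] xy yz]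
  obtain e where "choice [j \<mapsto> e] {x, y} = {x}" "choice [j \<mapsto> e] {y, z} = {y}"
    using SD by (elim conjE exE) (rule that; assumption)
  from pref_pair_if_choice[OF this(1)] pref_pair_if_choice[OF this(2)] assms(2-4)
  show "\<exists>e. strict (pref [j \<mapsto> e]) x y \<and> strict (pref [j \<mapsto> e]) y z"
    unfolding strict_def by (intro exI[of _ e]) simp
  obtain e where "choice [j \<mapsto> e] {x, y} = {x, y}" "choice [j \<mapsto> e] {y, z} = {y}"
    using SD by (elim conjE exE) (rule that; assumption)
  from pref_pair_if_choice[OF this(1)] pref_pair_if_choice[OF this(2)] assms(2-4)
  show "\<exists>e. pref [j \<mapsto> e] x y \<and> pref [j \<mapsto> e] y x \<and> strict (pref [j \<mapsto> e]) y z"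
    unfolding strict_def by (intro exI[of _ e]) simp
  obtain e where "choice [j \<mapsto> e] {x, y} = {x}" "choice [j \<mapsto> e] {y, z} = {y, z}"
    using SD by (elim conjE exE) (rule that; assumption)
  from pref_pair_if_choice[OF this(1)] pref_pair_if_choice[OF this(2)] assms(2-4)
  show "\<exists>e. strict (pref [j \<mapsto> e]) x y \<and> pref [j \<mapsto> e] y z \<and> pref [j \<mapsto> e] z y"
    unfolding strict_def by (intro exI[of _ e]) simp
qed

lemma entails_if_dictator:
  assumes \<Phi>: "profile \<Phi>"
    and dictator: "\<And>x y. strict (pref [d \<mapsto> the (\<Phi> d)]) x y \<Longrightarrow> strict (pref \<Phi>) x y"
  shows "B (nab \<Phi> E) \<turnstile> B (nab [d \<mapsto> the (\<Phi> d)] E)"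
proof -
  have "{x \<in> S. \<forall>y\<in>S. pref \<Phi> x y} \<subseteq> {x \<in> S. \<forall>y\<in>S. pref [d \<mapsto> the (\<Phi> d)] x y}" for S
    using dictator pref_total[OF profile_singleton] unfolding strict_def by blast
  then show ?thesis
    unfolding entails_def models_nab[OF \<Phi>] models_nab[OF profile_singleton]
    by (simp add: choice_eq_maximal[OF _ models_B_nonempty] \<Phi> profile_singleton)
qed

lemma arrow_setting_pref:
  assumes "card (UNIV :: 'p set) \<ge> 2" "ESF_SD B nab" "ESF_U B nab" "ESF_I B nab"
    and N: "society N"
  shows "arrow_setting N (\<lambda>j e. pref [j \<mapsto> e]) pref"
proof unfold_locales
  show "finite N" using N unfolding society_def by blast
  show "\<exists>x y z :: 'p set. x \<noteq> y \<and> y \<noteq> z \<and> x \<noteq> z"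
    using three_interpretations[OF assms(1)] .
next
  fix j e
  show "totalp (pref [j \<mapsto> e])" "transp (pref [j \<mapsto> e])"
    by (rule pref_totalp[OF profile_singleton], rule pref_transp[OF profile_singleton])
next
  fix \<Phi> :: "'a \<rightharpoonup> 'e" assume "dom \<Phi> = N"
  with N have "profile \<Phi>" by (rule profile_if_dom_society)
  then show "totalp (pref \<Phi>)" "transp (pref \<Phi>)"
    by (rule pref_totalp, rule pref_transp)
next
  fix \<Phi> \<Psi> :: "'a \<rightharpoonup> 'e" and x y
  assume "dom \<Phi> = N" "dom \<Psi> = N"
    and "\<forall>j\<in>N. agree_on (pref [j \<mapsto> the (\<Phi> j)]) (pref [j \<mapsto> the (\<Psi> j)]) x y"
  then show "agree_on (pref \<Phi>) (pref \<Psi>) x y"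
    using IIA_if_ESF_I[OF assms(4) profile_if_dom_society[OF N]] by simp
next
  fix \<Phi> :: "'a \<rightharpoonup> 'e" and x y
  assume "dom \<Phi> = N" "\<forall>j\<in>N. strict (pref [j \<mapsto> the (\<Phi> j)]) x y"
  then show "strict (pref \<Phi>) x y"
    using pareto_if_ESF_U_I[OF assms(3,4) profile_if_dom_society[OF N]] by simp
next
  fix x y z :: "'p set" and j :: 'a
  assume "x \<noteq> y" "y \<noteq> z" "x \<noteq> z"
  from ballots_if_ESF_SD[OF assms(2) this]
  show "\<exists>e. strict (pref [j \<mapsto> e]) x y \<and> strict (pref [j \<mapsto> e]) y z"
    "\<exists>e. pref [j \<mapsto> e] x y \<and> pref [j \<mapsto> e] y x \<and> strict (pref [j \<mapsto> e]) y z"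
    "\<exists>e. strict (pref [j \<mapsto> e]) x y \<and> pref [j \<mapsto> e] y z \<and> pref [j \<mapsto> e] z y" .
qed

end

theorem corollary2:
  fixes B :: "'e \<Rightarrow> 'p::finite form"
    and nab :: "('a::wellorder \<rightharpoonup> 'e) \<Rightarrow> 'e \<Rightarrow> 'e"
  assumes "epistemic_space B"
    and "card (UNIV :: 'p set) \<ge> 2"
    and "ES_basic_fusion B nab"
    and "ESF_SD B nab"
    and "ESF_U B nab"
    and "ESF_I B nab"
  shows "ESF_D B nab"
proof -
  interpret ES_fusion B nab using assms(1,3) by unfold_locales
  have "\<exists>d\<in>N. \<forall>\<Phi> E. dom \<Phi> = N \<longrightarrow> B (nab \<Phi> E) \<turnstile> B (nab [d \<mapsto> the (\<Phi> d)] E)"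
    if N: "society N" for N
  proof -
    interpret arrow_setting N "\<lambda>j e. pref [j \<mapsto> e]" pref
      by (rule arrow_setting_pref[OF assms(2,4-6) N])
    obtain d where d: "d \<in> N" "decisive {d}" using exists_dictator by blast
    have "B (nab \<Phi> E) \<turnstile> B (nab [d \<mapsto> the (\<Phi> d)] E)" if "dom \<Phi> = N" for \<Phi> E
      by (rule entails_if_dictator[OF profile_if_dom_society[OF N that] strict_if_dictator[OF d(2) that]])
    with d(1) show ?thesis by blast
  qed
  then show ?thesis unfolding ESF_D_def by blast
qed

end
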